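(* Let $P$ be an $n$-element poset with connected components $P_1,\ldots,P_r$, and let $n_i=|P_i|$. If for each $i$ the poset $P_i$ has at most $(n_i-1)!$ tangled labelings, then $P$ has at most $(n-r)(n-2)!$ tangled labelings.
   Context: A labeling of an $m$-element poset is a bijection to $[m]$; a linear extension is a labeling with $x<y\Rightarrow L(x)<L(y)$. Promotion $\partial$: for non-maximal $y$, the $L$-successor of $y$ is the element greater than $y$ with minimal label; the promotion chain is $v_1=L^{-1}(1)$, $v_{i+1}$ the $L$-successor of $v_i$, ending at the first maximal $v_p$; $\partial(L)(y)=L(y)-1$ off the chain, $\partial(L)(v_i)=L(v_{i+1})-1$ for $i<p$, $\partial(L)(v_p)=m$. The sorting time of $L$ is the least $k\ge0$ with $\partial^k(L)$ a linear extension; a labeling of an $m$-element poset is tangled if its sorting time is $m-1$. Connected components are those of the Hasse diagram. *)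

theory Defs
  imports Main
begin

text \<open>A finite poset is given by a finite carrier A and a strict order lt on A.
 Every notion below is taken relative to the carrier, so using a subset C of A
 as carrier yields the induced subposet.\<close>

definition strict_poset :: "'a set \<Rightarrow> ('a \<Rightarrow> 'a \<Rightarrow> bool) \<Rightarrow> bool" where
  "strict_poset A lt \<longleftrightarrow> finite A \<and> (\<forall>x\<in>A. \<not> lt x x) \<and>
     (\<forall>x\<in>A. \<forall>y\<in>A. \<forall>z\<in>A. lt x y \<longrightarrow> lt y z \<longrightarrow> lt x z)"

definition labelings :: "'a set \<Rightarrow> ('a \<Rightarrow> nat) set" where
  "labelings A = {L. bij_betw L A {1..card A} \<and> (\<forall>x. x \<notin> A \<longrightarrow> L x = 0)}"

definition is_linext :: "'a set \<Rightarrow> ('a \<Rightarrow> 'a \<Rightarrow> bool) \<Rightarrow> ('a \<Rightarrow> nat) \<Rightarrow> bool" where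
  "is_linext A lt L \<longleftrightarrow> (\<forall>x\<in>A. \<forall>y\<in>A. lt x y \<longrightarrow> L x < L y)"

definition is_maximal :: "'a set \<Rightarrow> ('a \<Rightarrow> 'a \<Rightarrow> bool) \<Rightarrow> 'a \<Rightarrow> bool" where
  "is_maximal A lt y \<longleftrightarrow> y \<in> A \<and> \<not> (\<exists>z\<in>A. lt y z)"

definition lsucc :: "'a set \<Rightarrow> ('a \<Rightarrow> 'a \<Rightarrow> bool) \<Rightarrow> ('a \<Rightarrow> nat) \<Rightarrow> 'a \<Rightarrow> 'a" where
  "lsucc A lt L y = (ARG_MIN L z. z \<in> A \<and> lt y z)"

definition chain_start :: "'a set \<Rightarrow> ('a \<Rightarrow> nat) \<Rightarrow> 'a" where
  "chain_start A L = (THE x. x \<in> A \<and> L x = 1)"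

definition promo_chain :: "'a set \<Rightarrow> ('a \<Rightarrow> 'a \<Rightarrow> bool) \<Rightarrow> ('a \<Rightarrow> nat) \<Rightarrow> 'a set" where
  "promo_chain A lt L = {v. \<exists>k. v = (lsucc A lt L ^^ k) (chain_start A L) \<and>
      (\<forall>j<k. \<not> is_maximal A lt ((lsucc A lt L ^^ j) (chain_start A L)))}"

definition promotion :: "'a set \<Rightarrow> ('a \<Rightarrow> 'a \<Rightarrow> bool) \<Rightarrow> ('a \<Rightarrow> nat) \<Rightarrow> ('a \<Rightarrow> nat)" where
  "promotion A lt L = (\<lambda>y.
     if y \<notin> A then 0
     else if y \<in> promo_chain A lt L then
       (if is_maximal A lt y then card A else L (lsucc A lt L y) - 1)
     else L y - 1)"

definition sorting_time :: "'a set \<Rightarrow> ('a \<Rightarrow> 'a \<Rightarrow> bool) \<Rightarrow> ('a \<Rightarrow> nat) \<Rightarrow> nat" where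
  "sorting_time A lt L = (LEAST k. is_linext A lt ((promotion A lt ^^ k) L))"

text \<open>Tangled: sorting time equals m-1 (stated as: m-1 is the least such k).\<close>
definition tangled :: "'a set \<Rightarrow> ('a \<Rightarrow> 'a \<Rightarrow> bool) \<Rightarrow> ('a \<Rightarrow> nat) \<Rightarrow> bool" where
  "tangled A lt L \<longleftrightarrow> is_linext A lt ((promotion A lt ^^ (card A - 1)) L) \<and>
     (\<forall>k < card A - 1. \<not> is_linext A lt ((promotion A lt ^^ k) L))"

definition tangled_labelings :: "'a set \<Rightarrow> ('a \<Rightarrow> 'a \<Rightarrow> bool) \<Rightarrow> ('a \<Rightarrow> nat) set" where
  "tangled_labelings A lt = {L \<in> labelings A. tangled A lt L}"

definition covers :: "'a set \<Rightarrow> ('a \<Rightarrow> 'a \<Rightarrow> bool) \<Rightarrow> ('a \<times> 'a) set" where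
  "covers A lt = {(x, y). x \<in> A \<and> y \<in> A \<and> lt x y \<and> \<not> (\<exists>z\<in>A. lt x z \<and> lt z y)}"

definition hasse_connected :: "'a set \<Rightarrow> ('a \<Rightarrow> 'a \<Rightarrow> bool) \<Rightarrow> ('a \<times> 'a) set" where
  "hasse_connected A lt = Id_on A \<union> (covers A lt \<union> (covers A lt)\<inverse>)\<^sup>+"

definition components :: "'a set \<Rightarrow> ('a \<Rightarrow> 'a \<Rightarrow> bool) \<Rightarrow> 'a set set" where
  "components A lt = A // hasse_connected A lt"

end

theory Submission
  imports Defs "HOL-Library.FuncSet"
begin

text \<open>Promotion lowers every label by one except along the promotion chain, which starts at
  label \<open>1\<close> and stays in one connected component. So the standardization of a labeling to a
  component \<open>C\<close> is either unchanged by a promotion step (label \<open>1\<close> outside \<open>C\<close>) or promoted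
  as a labeling of \<open>C\<close>. Moreover, if the labels \<open>\<ge> t\<close> respect the order, then after one
  promotion the labels \<open>\<ge> t - 1\<close> do; so every labeling is sorted after \<open>n - 1\<close> steps, and it is
  tangled iff it is not sorted after \<open>n - 2\<close> steps.

  For a tangled \<open>L\<close> the unsorted pair after \<open>n - 2\<close> steps carries the labels \<open>2\<close> and \<open>1\<close>; it
  lies in one component \<open>C\<close>, which therefore contains the labels \<open>n - 1\<close> and \<open>n\<close> of \<open>L\<close>. Then
  \<open>C\<close> is promoted exactly \<open>|C| - 2\<close> times in those steps, so the standardization of \<open>L\<close> on \<open>C\<close>
  is tangled. Such an \<open>L\<close> is determined by that tangled labeling of \<open>C\<close> and an injective
  choice of labels in \<open>{1..n-2}\<close> outside \<open>C\<close>, which gives at most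
  \<open>(|C| - 1)! (n - 2)! / (|C| - 2)! = (|C| - 1) (n - 2)!\<close> labelings per component; the sum over
  the \<open>r\<close> components is \<open>(n - r) (n - 2)!\<close>.\<close>

section \<open>Labelings\<close>

lemma labelings_inj_on: "L \<in> labelings A \<Longrightarrow> inj_on L A"
  unfolding labelings_def bij_betw_def by auto

lemma labelings_image: "L \<in> labelings A \<Longrightarrow> L ` A = {1..card A}"
  unfolding labelings_def bij_betw_def by auto

lemma labelings_outside: "L \<in> labelings A \<Longrightarrow> x \<notin> A \<Longrightarrow> L x = 0"
  unfolding labelings_def by auto

lemma labelings_range: "L \<in> labelings A \<Longrightarrow> x \<in> A \<Longrightarrow> 1 \<le> L x \<and> L x \<le> card A"
  using labelings_image by fastforce

lemma labelingsI:
  assumes "finite A" "inj_on L A" "L ` A \<subseteq> {1..card A}" "\<And>x. x \<notin> A \<Longrightarrow> L x = 0"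
  shows "L \<in> labelings A"
proof -
  have "card (L ` A) = card {1..card A}"
    using assms(2) by (simp add: card_image)
  then have "L ` A = {1..card A}"
    using assms(3) by (metis card_subset_eq finite_atLeastAtMost)
  then show ?thesis
    using assms unfolding labelings_def bij_betw_def by auto
qed

lemma finite_labelings:
  assumes "finite A"
  shows "finite (labelings A)"
proof -
  have "inj_on (\<lambda>L. restrict L A) (labelings A)"
  proof (rule inj_onI, rule ext)
    fix L L' x
    assume "L \<in> labelings A" "L' \<in> labelings A" "restrict L A = restrict L' A"
    then show "L x = L' x"
      by (cases "x \<in> A") (auto dest: fun_cong[of _ _ x] simp: labelings_outside)
  qed
  moreover have "(\<lambda>L. restrict L A) ` labelings A \<subseteq> A \<rightarrow>\<^sub>E {1..card A}"
    unfolding labelings_def bij_betw_def by auto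
  then have "finite ((\<lambda>L. restrict L A) ` labelings A)"
    by (rule finite_subset) (simp add: assms finite_PiE)
  ultimately show ?thesis
    by (rule finite_imageD[rotated])
qed

lemma strict_poset_subset: "strict_poset A lt \<Longrightarrow> C \<subseteq> A \<Longrightarrow> strict_poset C lt"
  unfolding strict_poset_def by (meson finite_subset subsetD)

section \<open>The promotion chain\<close>

locale labeled_poset =
  fixes A :: "'a set" and lt :: "'a \<Rightarrow> 'a \<Rightarrow> bool" and L :: "'a \<Rightarrow> nat"
  assumes poset: "strict_poset A lt"
    and labeling: "L \<in> labelings A"
    and nonempty: "A \<noteq> {}"
begin

abbreviation "start \<equiv> chain_start A L"
abbreviation "succ \<equiv> lsucc A lt L"
abbreviation "maximal \<equiv> is_maximal A lt"
abbreviation "chain \<equiv> promo_chain A lt L"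

lemma finite_carrier: "finite A"
  using poset unfolding strict_poset_def by blast

lemma lt_irrefl: "x \<in> A \<Longrightarrow> \<not> lt x x"
  using poset unfolding strict_poset_def by blast

lemma lt_trans: "x \<in> A \<Longrightarrow> y \<in> A \<Longrightarrow> z \<in> A \<Longrightarrow> lt x y \<Longrightarrow> lt y z \<Longrightarrow> lt x z"
  using poset unfolding strict_poset_def by blast

lemma inj_label: "x \<in> A \<Longrightarrow> y \<in> A \<Longrightarrow> L x = L y \<Longrightarrow> x = y"
  using labelings_inj_on[OF labeling] by (rule inj_onD)

lemma label_range: "x \<in> A \<Longrightarrow> 1 \<le> L x \<and> L x \<le> card A"
  using labelings_range[OF labeling] .

lemma card_pos: "0 < card A"
  using finite_carrier nonempty by (simp add: card_gt_0_iff)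

lemma start_mem: "start \<in> A" and label_start: "L start = 1"
proof -
  have "1 \<in> L ` A"
    using labelings_image[OF labeling] card_pos by simp
  then obtain x where x: "x \<in> A" "L x = 1"
    by auto
  then have "\<exists>!x. x \<in> A \<and> L x = 1"
    using inj_label[of _ x] by auto
  then have "start \<in> A \<and> L start = 1"
    unfolding chain_start_def by (rule theI')
  then show "start \<in> A" "L start = 1" by auto
qed

lemma start_unique: "z \<in> A \<Longrightarrow> L z = 1 \<Longrightarrow> z = start"
  using inj_label[of z start] start_mem label_start by simp

lemma
  assumes "y \<in> A" "\<not> maximal y"
  shows succ_mem: "succ y \<in> A"
    and lt_succ: "lt y (succ y)"
    and label_succ_le: "z \<in> A \<Longrightarrow> lt y z \<Longrightarrow> L (succ y) \<le> L z"
proof -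
  obtain z where "z \<in> A" "lt y z"
    using assms unfolding is_maximal_def by auto
  then show "succ y \<in> A" "lt y (succ y)" "z \<in> A \<Longrightarrow> lt y z \<Longrightarrow> L (succ y) \<le> L z" for z
    using arg_min_nat_lemma[of "\<lambda>z. z \<in> A \<and> lt y z"] unfolding lsucc_def by blast+
qed

lemma succ_eqI:
  assumes "y \<in> A" "u \<in> A" "lt y u" "\<And>z. z \<in> A \<Longrightarrow> lt y z \<Longrightarrow> L u \<le> L z"
  shows "succ y = u"
proof -
  have "\<not> maximal y"
    using assms(2,3) unfolding is_maximal_def by blast
  then have "L (succ y) = L u"
    using label_succ_le[OF assms(1) _ assms(2,3)] assms(4)[OF succ_mem lt_succ] assms(1) by fastforce
  then show ?thesis
    using inj_label[OF succ_mem[OF assms(1) \<open>\<not> maximal y\<close>] assms(2)] by blast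
qed

text \<open>\<open>chain_elem k\<close> is the paper's \<open>v\<^sub>k\<^sub>+\<^sub>1\<close>; it lies on the promotion chain iff
  \<open>chain_defined k\<close>.\<close>

definition chain_elem :: "nat \<Rightarrow> 'a" where
  "chain_elem k = (succ ^^ k) start"

definition chain_defined :: "nat \<Rightarrow> bool" where
  "chain_defined k \<longleftrightarrow> (\<forall>j<k. \<not> maximal (chain_elem j))"

lemma promo_chain_eq: "chain = {chain_elem k |k. chain_defined k}"
  unfolding promo_chain_def chain_elem_def chain_defined_def by blast

lemma chain_elem_0: "chain_elem 0 = start"
  unfolding chain_elem_def by simp

lemma chain_elem_Suc: "chain_elem (Suc k) = succ (chain_elem k)"
  unfolding chain_elem_def by simp

lemma chain_defined_Suc:
  "chain_defined (Suc k) \<longleftrightarrow> chain_defined k \<and> \<not> maximal (chain_elem k)"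
  unfolding chain_defined_def by (auto simp: less_Suc_eq)

lemma chain_defined_0: "chain_defined 0"
  unfolding chain_defined_def by simp

lemma chain_elem_mem: "chain_defined k \<Longrightarrow> chain_elem k \<in> A"
  by (induction k) (auto simp: chain_elem_0 chain_elem_Suc chain_defined_Suc start_mem succ_mem)

lemma chain_elem_strict_mono:
  "chain_defined k \<Longrightarrow> i < k \<Longrightarrow> lt (chain_elem i) (chain_elem k)"
proof (induction k)
  case (Suc k)
  then have step: "lt (chain_elem k) (chain_elem (Suc k))"
    by (simp add: chain_defined_Suc chain_elem_Suc lt_succ chain_elem_mem)
  show ?case
  proof (cases "i = k")
    case False
    with Suc have "lt (chain_elem i) (chain_elem k)" and defined: "chain_defined k" "chain_defined i"
      by (auto simp: chain_defined_Suc chain_defined_def)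
    with step show ?thesis
      using lt_trans chain_elem_mem Suc.prems(1) by blast
  qed (use step in simp)
qed simp

lemma chain_elem_inj:
  "chain_defined i \<Longrightarrow> chain_defined j \<Longrightarrow> chain_elem i = chain_elem j \<Longrightarrow> i = j"
proof (rule ccontr)
  assume "chain_defined i" "chain_defined j" "chain_elem i = chain_elem j" "i \<noteq> j"
  then show False
    using chain_elem_strict_mono[of i j] chain_elem_strict_mono[of j i] lt_irrefl chain_elem_mem
    by (cases "i < j") auto
qed

lemma chain_subset: "chain \<subseteq> A"
  using chain_elem_mem promo_chain_eq by auto

lemma start_in_chain: "start \<in> chain"
  using promo_chain_eq chain_elem_0 chain_defined_0 by auto

lemma succ_in_chain: "y \<in> chain \<Longrightarrow> \<not> maximal y \<Longrightarrow> succ y \<in> chain"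
  unfolding promo_chain_eq by (auto simp flip: chain_elem_Suc simp: chain_defined_Suc)

lemma chain_above_start: "y \<in> chain \<Longrightarrow> y = start \<or> lt start y"
  unfolding promo_chain_eq using chain_elem_strict_mono[of _ 0] chain_elem_0 by (auto simp: neq0_conv)

lemma chain_pred:
  assumes "w \<in> chain" "w \<noteq> start"
  obtains z where "z \<in> chain" "\<not> maximal z" "succ z = w"
proof -
  obtain k where k: "w = chain_elem k" "chain_defined k"
    using assms(1) promo_chain_eq by auto
  then obtain j where "k = Suc j"
    using assms(2) chain_elem_0 by (cases k) auto
  with k show ?thesis
    using that promo_chain_eq by (auto simp: chain_defined_Suc chain_elem_Suc)
qed

lemma succ_inj_on_chain:
  assumes "y1 \<in> chain" "y2 \<in> chain" "\<not> maximal y1" "\<not> maximal y2" "succ y1 = succ y2"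
  shows "y1 = y2"
proof -
  obtain i j where "y1 = chain_elem i" "chain_defined i" "y2 = chain_elem j" "chain_defined j"
    using assms(1,2) promo_chain_eq by auto
  with assms(3-5) show ?thesis
    using chain_elem_inj[of "Suc i" "Suc j"] by (simp add: chain_defined_Suc chain_elem_Suc)
qed

lemma succ_ne_start: "y \<in> chain \<Longrightarrow> \<not> maximal y \<Longrightarrow> succ y \<noteq> start"
proof
  assume y: "y \<in> chain" "\<not> maximal y" and "succ y = start"
  then have "y \<in> A" "lt start y \<or> y = start"
    using chain_above_start chain_subset by auto
  moreover from y \<open>y \<in> A\<close> have "lt y start"
    using lt_succ \<open>succ y = start\<close> by metis
  ultimately show False
    using lt_irrefl lt_trans start_mem by blast
qed

lemma maximal_in_chain_unique:
  assumes "y1 \<in> chain" "y2 \<in> chain" "maximal y1" "maximal y2"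
  shows "y1 = y2"
proof -
  obtain i j where "y1 = chain_elem i" "chain_defined i" "y2 = chain_elem j" "chain_defined j"
    using assms(1,2) promo_chain_eq by auto
  with assms(3,4) have "\<not> i < j" "\<not> j < i"
    unfolding chain_defined_def by auto
  with \<open>y1 = chain_elem i\<close> \<open>y2 = chain_elem j\<close> show ?thesis
    by simp
qed

end

section \<open>Promotion\<close>

context labeled_poset
begin

abbreviation "prom \<equiv> promotion A lt L"

definition chain_end :: "'a \<Rightarrow> bool" where
  "chain_end y \<longleftrightarrow> y \<in> chain \<and> maximal y"

text \<open>Promotion gives \<open>y\<close> the label of \<open>target y\<close> minus one, except at the end of the chain.\<close>

definition target :: "'a \<Rightarrow> 'a" where
  "target y = (if y \<in> chain then succ y else y)"

lemma promotion_chain_end: "chain_end y \<Longrightarrow> prom y = card A"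
  unfolding chain_end_def promotion_def using chain_subset by auto

lemma promotion_eq_target: "y \<in> A \<Longrightarrow> \<not> chain_end y \<Longrightarrow> prom y = L (target y) - 1"
  unfolding chain_end_def promotion_def target_def by auto

lemma not_maximal_if_not_chain_end: "y \<in> chain \<Longrightarrow> \<not> chain_end y \<Longrightarrow> \<not> maximal y"
  unfolding chain_end_def by blast

lemma target_mem: "y \<in> A \<Longrightarrow> \<not> chain_end y \<Longrightarrow> target y \<in> A"
  unfolding target_def using succ_mem not_maximal_if_not_chain_end by auto

lemma target_comparable: "y \<in> A \<Longrightarrow> \<not> chain_end y \<Longrightarrow> target y = y \<or> lt y (target y)"
  unfolding target_def using lt_succ not_maximal_if_not_chain_end by auto

lemma label_target: "y \<in> A \<Longrightarrow> \<not> chain_end y \<Longrightarrow> 2 \<le> L (target y) \<and> L (target y) \<le> card A"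
proof -
  assume y: "y \<in> A" "\<not> chain_end y"
  have "target y \<noteq> start"
    using succ_ne_start not_maximal_if_not_chain_end[OF _ y(2)] start_in_chain
    unfolding target_def by auto
  then have "L (target y) \<noteq> 1"
    using start_unique target_mem[OF y] by blast
  then show ?thesis
    using label_range target_mem[OF y] by fastforce
qed

lemma target_in_chain_iff: "y \<in> A \<Longrightarrow> \<not> chain_end y \<Longrightarrow> target y \<in> chain \<longleftrightarrow> y \<in> chain"
  unfolding target_def using succ_in_chain not_maximal_if_not_chain_end by auto

lemma target_inj:
  assumes "y1 \<in> A" "y2 \<in> A" "\<not> chain_end y1" "\<not> chain_end y2" "target y1 = target y2"
  shows "y1 = y2"
proof -
  have "y1 \<in> chain \<longleftrightarrow> y2 \<in> chain"
    using target_in_chain_iff assms by metis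
  then show ?thesis
    using assms succ_inj_on_chain not_maximal_if_not_chain_end unfolding target_def
    by (cases "y1 \<in> chain") auto
qed

lemma in_chain_if_lt_target: "x \<in> A \<Longrightarrow> lt x (target x) \<Longrightarrow> x \<in> chain"
  unfolding target_def using lt_irrefl by (cases "x \<in> chain") auto

lemma target_surj:
  assumes "w \<in> A" "w \<noteq> start"
  obtains y where "y \<in> A" "\<not> chain_end y" "target y = w"
proof (cases "w \<in> chain")
  case True
  then obtain z where z: "z \<in> chain" "\<not> maximal z" "succ z = w"
    using chain_pred assms(2) by blast
  show ?thesis
  proof (rule that)
    show "z \<in> A" "\<not> chain_end z" "target z = w"
      using z chain_subset unfolding chain_end_def target_def by auto
  qed
next
  case False
  show ?thesis
  proof (rule that)
    show "w \<in> A" "\<not> chain_end w" "target w = w"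
      using False assms(1) unfolding chain_end_def target_def by auto
  qed
qed

lemma promotion_less_iff:
  assumes "y1 \<in> A" "y2 \<in> A"
  shows "prom y1 < prom y2 \<longleftrightarrow>
    \<not> chain_end y1 \<and> (chain_end y2 \<or> L (target y1) < L (target y2))"
  using promotion_chain_end promotion_eq_target label_target assms
  by (cases "chain_end y1"; cases "chain_end y2") fastforce+

lemma promotion_labeling: "prom \<in> labelings A"
proof (rule labelingsI)
  show "inj_on prom A"
  proof (rule inj_onI)
    fix y1 y2
    assume y: "y1 \<in> A" "y2 \<in> A" "prom y1 = prom y2"
    then have "\<not> prom y1 < prom y2" "\<not> prom y2 < prom y1"
      by auto
    then consider "chain_end y1" "chain_end y2"
      | "\<not> chain_end y1" "\<not> chain_end y2" "L (target y1) = L (target y2)"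
      using promotion_less_iff[OF y(1,2)] promotion_less_iff[OF y(2,1)] by fastforce
    then show "y1 = y2"
    proof cases
      case 1
      then show ?thesis
        using maximal_in_chain_unique unfolding chain_end_def by blast
    next
      case 2
      then show ?thesis
        using y target_inj inj_label target_mem by blast
    qed
  qed
  show "prom ` A \<subseteq> {1..card A}"
    using promotion_chain_end promotion_eq_target label_target card_pos by fastforce
  show "\<And>x. x \<notin> A \<Longrightarrow> prom x = 0"
    unfolding promotion_def by simp
qed (rule finite_carrier)

lemma labeled_poset_promotion: "labeled_poset A lt prom"
  using poset promotion_labeling nonempty by unfold_locales

end

section \<open>Sorting\<close>

definition sorted_from :: "'a set \<Rightarrow> ('a \<Rightarrow> 'a \<Rightarrow> bool) \<Rightarrow> nat \<Rightarrow> ('a \<Rightarrow> nat) \<Rightarrow> bool" where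
  "sorted_from A lt t L \<longleftrightarrow> (\<forall>x\<in>A. \<forall>y\<in>A. lt x y \<longrightarrow> t \<le> L x \<longrightarrow> L x < L y)"

lemma sorted_from_0: "sorted_from A lt 0 L \<longleftrightarrow> is_linext A lt L"
  unfolding sorted_from_def is_linext_def by simp

context labeled_poset
begin

lemma label_le_label_target:
  assumes "sorted_from A lt t L" "y \<in> A" "\<not> chain_end y" "t \<le> L y"
  shows "L y \<le> L (target y)" and "y \<in> chain \<Longrightarrow> L y < L (target y)"
proof -
  show "y \<in> chain \<Longrightarrow> L y < L (target y)"
    using assms succ_mem lt_succ not_maximal_if_not_chain_end
    unfolding sorted_from_def target_def by simp
  then show "L y \<le> L (target y)"
    unfolding target_def by fastforce
qed

lemma label_target_le_label:
  assumes sorted: "sorted_from A lt t L" and x: "x \<in> A" and y: "y \<in> A" and "lt x y"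
    and "t \<le> L (target x)"
  shows "L (target x) \<le> L y"
proof (cases "x \<in> chain")
  case True
  have "\<not> maximal x"
    using y \<open>lt x y\<close> unfolding is_maximal_def by blast
  with True show ?thesis
    using label_succ_le[OF x _ y \<open>lt x y\<close>] unfolding target_def by simp
next
  case False
  then have "target x = x"
    unfolding target_def by simp
  then show ?thesis
    using sorted x y \<open>lt x y\<close> \<open>t \<le> L (target x)\<close> unfolding sorted_from_def
    by (simp add: less_imp_le)
qed

lemma sorted_from_promotion:
  assumes sorted: "sorted_from A lt t L"
  shows "sorted_from A lt (t - 1) prom"
  unfolding sorted_from_def
proof (intro ballI impI)
  fix x y
  assume x: "x \<in> A" and y: "y \<in> A" and "lt x y" and "t - 1 \<le> prom x"
  have x_end: "\<not> chain_end x"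
    using y \<open>lt x y\<close> unfolding chain_end_def is_maximal_def by auto
  have t_le: "t \<le> L (target x)"
    using \<open>t - 1 \<le> prom x\<close> promotion_eq_target[OF x x_end] label_target[OF x x_end] by linarith
  have "L (target x) < L (target y)" if y_end: "\<not> chain_end y"
  proof (cases "target x = y")
    case True
    then have "y \<in> chain"
      using in_chain_if_lt_target[OF x] \<open>lt x y\<close> target_in_chain_iff[OF x x_end] by simp
    then show ?thesis
      using label_le_label_target(2)[OF sorted y y_end] t_le True by simp
  next
    case False
    then have "L (target x) < L y"
      using label_target_le_label[OF sorted x y \<open>lt x y\<close> t_le] inj_label[OF target_mem[OF x x_end] y]
      by fastforce
    then show ?thesis
      using label_le_label_target(1)[OF sorted y y_end] t_le by simp
  qed
  then show "prom x < prom y"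
    using promotion_less_iff[OF x y] x_end by blast
qed

lemma sorted_from_Suc_card: "sorted_from A lt (Suc (card A)) L"
  unfolding sorted_from_def using label_range by fastforce

lemma linext_if_sorted_from_2:
  assumes "sorted_from A lt 2 L"
  shows "is_linext A lt L"
  unfolding is_linext_def
proof (intro ballI impI)
  fix x y
  assume xy: "x \<in> A" "y \<in> A" "lt x y"
  then have "L x \<noteq> L y"
    using inj_label[OF xy(1,2)] lt_irrefl[OF xy(1)] by auto
  then show "L x < L y"
    using assms xy label_range[OF xy(1)] label_range[OF xy(2)]
    unfolding sorted_from_def by (cases "L x = 1") auto
qed

end

lemma labeled_poset_promotion_power:
  "labeled_poset A lt L \<Longrightarrow> labeled_poset A lt ((promotion A lt ^^ k) L)"
  by (induction k) (simp_all add: labeled_poset.labeled_poset_promotion)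

lemma sorted_from_promotion_power:
  assumes "labeled_poset A lt L" "sorted_from A lt t L"
  shows "sorted_from A lt (t - k) ((promotion A lt ^^ k) L)"
proof (induction k)
  case (Suc k)
  have "sorted_from A lt (t - k - 1) (promotion A lt ((promotion A lt ^^ k) L))"
    using labeled_poset.sorted_from_promotion[OF labeled_poset_promotion_power[OF assms(1)] Suc.IH] .
  then show ?case
    by simp
qed (use assms in simp)

context labeled_poset
begin

lemma linext_promotion_power_card: "is_linext A lt ((promotion A lt ^^ (card A - 1)) L)"
proof -
  have "sorted_from A lt (Suc (card A) - (card A - 1)) ((promotion A lt ^^ (card A - 1)) L)"
    using sorted_from_promotion_power[OF labeled_poset_axioms sorted_from_Suc_card] .
  moreover have "Suc (card A) - (card A - 1) = 2"
    using card_pos by linarith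
  ultimately show ?thesis
    using labeled_poset.linext_if_sorted_from_2
        [OF labeled_poset_promotion_power[OF labeled_poset_axioms]]
    by simp
qed

lemma linext_promotion_power: "is_linext A lt L \<Longrightarrow> is_linext A lt ((promotion A lt ^^ k) L)"
  using sorted_from_promotion_power[OF labeled_poset_axioms, of 0 k] by (simp add: sorted_from_0)

lemma tangled_iff_not_linext:
  assumes "2 \<le> card A"
  shows "tangled A lt L \<longleftrightarrow> \<not> is_linext A lt ((promotion A lt ^^ (card A - 2)) L)"
proof
  assume "tangled A lt L"
  then show "\<not> is_linext A lt ((promotion A lt ^^ (card A - 2)) L)"
    unfolding tangled_def using assms by simp
next
  assume not_sorted: "\<not> is_linext A lt ((promotion A lt ^^ (card A - 2)) L)"
  have "\<not> is_linext A lt ((promotion A lt ^^ k) L)" if "k < card A - 1" for k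
  proof
    assume "is_linext A lt ((promotion A lt ^^ k) L)"
    then have "is_linext A lt ((promotion A lt ^^ (card A - 2 - k)) ((promotion A lt ^^ k) L))"
      using labeled_poset.linext_promotion_power
          [OF labeled_poset_promotion_power[OF labeled_poset_axioms]]
      by blast
    moreover have "(promotion A lt ^^ (card A - 2 - k)) ((promotion A lt ^^ k) L)
        = (promotion A lt ^^ (card A - 2 - k + k)) L"
      by (simp only: funpow_add comp_apply)
    moreover have "card A - 2 - k + k = card A - 2"
      using that by linarith
    ultimately show False
      using not_sorted by simp
  qed
  then show "tangled A lt L"
    unfolding tangled_def using linext_promotion_power_card by blast
qed

end

section \<open>Connected components\<close>

lemma lt_in_trancl_covers:
  assumes poset: "strict_poset A lt" and "x \<in> A" "y \<in> A" "lt x y"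
  shows "(x, y) \<in> (covers A lt)\<^sup>+"
  using assms(2-4)
proof (induction "card {z \<in> A. lt x z \<and> lt z y}" arbitrary: x y rule: less_induct)
  case less
  show ?case
  proof (cases "\<exists>z\<in>A. lt x z \<and> lt z y")
    case False
    then show ?thesis
      using less.prems unfolding covers_def by auto
  next
    case True
    then obtain z where z: "z \<in> A" "lt x z" "lt z y"
      by blast
    have fin: "finite {w \<in> A. lt x w \<and> lt w y}"
      using poset unfolding strict_poset_def by simp
    have "{w \<in> A. lt x w \<and> lt w z} \<subset> {w \<in> A. lt x w \<and> lt w y}"
      "{w \<in> A. lt z w \<and> lt w y} \<subset> {w \<in> A. lt x w \<and> lt w y}"
      using poset z less.prems unfolding strict_poset_def by blast+
    then have "(x, z) \<in> (covers A lt)\<^sup>+" "(z, y) \<in> (covers A lt)\<^sup>+"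
      using less.hyps psubset_card_mono[OF fin] z less.prems by blast+
    then show ?thesis
      by (rule trancl_trans)
  qed
qed

lemma hasse_connected_equiv: "equiv A (hasse_connected A lt)"
proof (rule equivI)
  let ?S = "covers A lt \<union> (covers A lt)\<inverse>"
  have "?S \<subseteq> A \<times> A"
    unfolding covers_def by auto
  then have "?S\<^sup>+ \<subseteq> A \<times> A"
    by (rule trancl_subset_Sigma)
  then show "hasse_connected A lt \<subseteq> A \<times> A"
    unfolding hasse_connected_def by auto
  show "refl_on A (hasse_connected A lt)"
    unfolding hasse_connected_def by (rule refl_onI) auto
  have "sym ?S"
    by (auto simp: sym_def)
  then show "sym (hasse_connected A lt)"
    unfolding hasse_connected_def by (rule sym_Un[OF sym_Id_on sym_trancl])
  show "trans (hasse_connected A lt)"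
    unfolding hasse_connected_def by (rule transI) (auto intro: trancl_trans)
qed

lemma lt_imp_hasse_connected:
  assumes "strict_poset A lt" "x \<in> A" "y \<in> A" "lt x y"
  shows "(x, y) \<in> hasse_connected A lt"
  using trancl_mono[OF lt_in_trancl_covers[OF assms]] unfolding hasse_connected_def by blast

lemma component_of_lt:
  assumes "strict_poset A lt" "x \<in> A" "y \<in> A" "lt x y"
  obtains C where "C \<in> components A lt" "x \<in> C" "y \<in> C"
proof
  show "hasse_connected A lt `` {x} \<in> components A lt"
    unfolding components_def using assms(2) by (rule quotientI)
  show "x \<in> hasse_connected A lt `` {x}"
    using hasse_connected_equiv assms(2) by (rule equiv_class_self)
  show "y \<in> hasse_connected A lt `` {x}"
    using lt_imp_hasse_connected[OF assms] by simp
qed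

definition comparability_closed :: "'a set \<Rightarrow> ('a \<Rightarrow> 'a \<Rightarrow> bool) \<Rightarrow> 'a set \<Rightarrow> bool" where
  "comparability_closed A lt C \<longleftrightarrow> C \<subseteq> A \<and> (\<forall>z\<in>C. \<forall>w\<in>A. lt z w \<or> lt w z \<longrightarrow> w \<in> C)"

lemma components_subset: "C \<in> components A lt \<Longrightarrow> C \<subseteq> A"
  unfolding components_def using hasse_connected_equiv by (rule in_quotient_imp_subset)

lemma comparability_closed_components:
  assumes poset: "strict_poset A lt" and C: "C \<in> components A lt"
  shows "comparability_closed A lt C"
  unfolding comparability_closed_def
proof (intro conjI ballI impI)
  show "C \<subseteq> A"
    using C by (rule components_subset)
  fix z w
  assume "z \<in> C" "w \<in> A" "lt z w \<or> lt w z"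
  moreover have "z \<in> A"
    using \<open>z \<in> C\<close> components_subset[OF C] by blast
  ultimately have "(z, w) \<in> hasse_connected A lt"
    using lt_imp_hasse_connected[OF poset] hasse_connected_equiv
    unfolding equiv_def by (metis symD)
  then show "w \<in> C"
    using in_quotient_imp_closed[OF hasse_connected_equiv C[unfolded components_def] \<open>z \<in> C\<close>]
    by blast
qed

lemma sum_card_components:
  assumes "finite A"
  shows "(\<Sum>C\<in>components A lt. card C - 1) = card A - card (components A lt)"
proof -
  let ?K = "components A lt"
  have fin: "finite C" if "C \<in> ?K" for C
    using assms components_subset[OF that] by (rule finite_subset[rotated])
  have "card A = card (\<Union>?K)"
    using Union_quotient[OF hasse_connected_equiv[of A lt]] unfolding components_def by simp
  also have "\<dots> = (\<Sum>C\<in>?K. card C)"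
  proof (rule card_Union_disjoint[OF _ fin])
    show "pairwise disjnt ?K"
      using quotient_disj[OF hasse_connected_equiv]
      unfolding components_def pairwise_def disjnt_def by blast
  qed
  moreover have "1 \<le> card C" if "C \<in> ?K" for C
    using fin[OF that] in_quotient_imp_non_empty[OF hasse_connected_equiv that[unfolded components_def]]
    by (simp add: Suc_le_eq card_gt_0_iff)
  ultimately show ?thesis
    using sum_subtractf_nat[of ?K "\<lambda>_. 1" card] by simp
qed

section \<open>Standardization\<close>

definition standardize :: "'a set \<Rightarrow> ('a \<Rightarrow> nat) \<Rightarrow> 'a \<Rightarrow> nat" where
  "standardize C L z = (if z \<in> C then card {w \<in> C. L w \<le> L z} else 0)"

lemma standardize_less_iff:
  assumes "finite C" "inj_on L C" "z1 \<in> C" "z2 \<in> C"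
  shows "standardize C L z1 < standardize C L z2 \<longleftrightarrow> L z1 < L z2"
proof -
  have le: "standardize C L a \<le> standardize C L b" if "a \<in> C" "b \<in> C" "L a \<le> L b" for a b
    using that assms(1) unfolding standardize_def by (auto intro: card_mono)
  have less: "standardize C L a < standardize C L b" if "a \<in> C" "b \<in> C" "L a < L b" for a b
  proof -
    have "{w \<in> C. L w \<le> L a} \<subseteq> {w \<in> C. L w \<le> L b}"
      "b \<in> {w \<in> C. L w \<le> L b}" "b \<notin> {w \<in> C. L w \<le> L a}"
      using that by auto
    then have "{w \<in> C. L w \<le> L a} \<subset> {w \<in> C. L w \<le> L b}"
      by blast
    then show ?thesis
      using that assms(1) unfolding standardize_def by (simp add: psubset_card_mono)
  qed
  show ?thesis
    using le[OF assms(4,3)] less[OF assms(3,4)] by (meson leD not_le_imp_less)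
qed

lemma standardize_labeling:
  assumes "finite C" "inj_on L C"
  shows "standardize C L \<in> labelings C"
proof (rule labelingsI[OF assms(1)])
  show "inj_on (standardize C L) C"
  proof (rule inj_onI)
    fix a b
    assume ab: "a \<in> C" "b \<in> C" "standardize C L a = standardize C L b"
    then have "L a = L b"
      using standardize_less_iff[OF assms ab(1,2)] standardize_less_iff[OF assms ab(2,1)] by auto
    then show "a = b"
      using inj_onD[OF assms(2) _ ab(1,2)] by blast
  qed
  have "1 \<le> card {w \<in> C. L w \<le> L z} \<and> card {w \<in> C. L w \<le> L z} \<le> card C" if "z \<in> C" for z
    using that assms(1) by (auto simp: Suc_le_eq card_gt_0_iff intro: card_mono)
  then show "standardize C L ` C \<subseteq> {1..card C}"
    unfolding standardize_def by auto
qed (simp add: standardize_def)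

lemma standardize_cong:
  assumes "\<And>z1 z2. z1 \<in> C \<Longrightarrow> z2 \<in> C \<Longrightarrow> L z1 < L z2 \<longleftrightarrow> L' z1 < L' z2"
  shows "standardize C L = standardize C L'"
proof
  fix z
  have "z \<in> C \<Longrightarrow> {w \<in> C. L w \<le> L z} = {w \<in> C. L' w \<le> L' z}"
    using assms by (auto simp flip: not_less)
  then show "standardize C L z = standardize C L' z"
    unfolding standardize_def by simp
qed

lemma standardize_labeling_id:
  assumes "M \<in> labelings C"
  shows "standardize C M = M"
proof
  fix z
  show "standardize C M z = M z"
  proof (cases "z \<in> C")
    case True
    have "M ` {w \<in> C. M w \<le> M z} = {u \<in> M ` C. u \<le> M z}"
      by auto
    also have "\<dots> = {1..M z}"
      using labelings_image[OF assms] labelings_range[OF assms True] by auto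
    finally have "card (M ` {w \<in> C. M w \<le> M z}) = M z"
      by simp
    moreover have "inj_on M {w \<in> C. M w \<le> M z}"
      using labelings_inj_on[OF assms] by (rule inj_on_subset) auto
    ultimately have "card {w \<in> C. M w \<le> M z} = M z"
      by (simp add: card_image)
    with True show ?thesis
      unfolding standardize_def by simp
  qed (simp add: standardize_def labelings_outside[OF assms])
qed

lemma standardize_eq_rank:
  assumes "inj_on L C" "z \<in> C"
  shows "standardize C L z = standardize (L ` C) id (L z)"
proof -
  have "card {w \<in> C. L w \<le> L z} = card (L ` {w \<in> C. L w \<le> L z})"
    using assms(1) by (simp add: card_image inj_on_subset)
  also have "L ` {w \<in> C. L w \<le> L z} = {u \<in> L ` C. u \<le> L z}"
    by auto
  finally show ?thesis
    using assms(2) unfolding standardize_def by simp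
qed

lemma labeling_eq_if_standardize_eq:
  assumes L1: "L1 \<in> labelings A" and L2: "L2 \<in> labelings A" and "C \<subseteq> A" "finite A"
    and outside: "\<And>z. z \<in> A - C \<Longrightarrow> L1 z = L2 z"
    and standardize_eq: "standardize C L1 = standardize C L2"
  shows "L1 = L2"
proof
  have image_C: "L ` C = L ` A - L ` (A - C)" if "L \<in> labelings A" for L
    using inj_on_image_set_diff[OF labelings_inj_on[OF that], of A C] \<open>C \<subseteq> A\<close> by auto
  have same_image: "L1 ` C = L2 ` C"
    using image_C[OF L1] image_C[OF L2] outside labelings_image[OF L1] labelings_image[OF L2]
    by (metis image_cong)
  have inj1: "inj_on L1 C" and inj2: "inj_on L2 C"
    using labelings_inj_on[OF L1] labelings_inj_on[OF L2] \<open>C \<subseteq> A\<close> by (auto intro: inj_on_subset)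
  have fin: "finite (L1 ` C)"
    using \<open>finite A\<close> \<open>C \<subseteq> A\<close> by (simp add: finite_subset)
  fix z
  show "L1 z = L2 z"
  proof (cases "z \<in> C")
    case True
    then have "standardize (L1 ` C) id (L1 z) = standardize (L1 ` C) id (L2 z)"
      using standardize_eq_rank[OF inj1] standardize_eq_rank[OF inj2] standardize_eq same_image
      by metis
    moreover have "L1 z \<in> L1 ` C" "L2 z \<in> L1 ` C"
      using True same_image by auto
    ultimately show ?thesis
      using standardize_less_iff[OF fin inj_on_id] by (metis id_apply less_irrefl nat_neq_iff)
  next
    case False
    then show ?thesis
      using outside labelings_outside[OF L1] labelings_outside[OF L2] by (cases "z \<in> A") auto
  qed
qed

section \<open>Promotion restricted to a comparability-closed part\<close>

locale closed_part = labeled_poset +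
  fixes C :: "'a set"
  assumes closed: "comparability_closed A lt C"
begin

lemma part_subset: "C \<subseteq> A"
  using closed unfolding comparability_closed_def by blast

lemma mem_part_if_lt: "z \<in> C \<Longrightarrow> w \<in> A \<Longrightarrow> lt z w \<or> lt w z \<Longrightarrow> w \<in> C"
  using closed unfolding comparability_closed_def by blast

lemma finite_part: "finite C"
  using finite_carrier part_subset by (rule finite_subset[rotated])

lemma inj_on_part: "inj_on L C"
  using labelings_inj_on[OF labeling] part_subset by (rule inj_on_subset)

lemma is_maximal_part_iff: "y \<in> C \<Longrightarrow> is_maximal C lt y \<longleftrightarrow> maximal y"
  using part_subset mem_part_if_lt unfolding is_maximal_def by blast

lemma target_in_part:
  assumes "y \<in> C" "\<not> chain_end y"
  shows "target y \<in> C"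
proof -
  have "y \<in> A"
    using assms(1) part_subset by blast
  then show ?thesis
    using target_comparable[OF \<open>y \<in> A\<close> assms(2)] target_mem[OF \<open>y \<in> A\<close> assms(2)]
      mem_part_if_lt[OF assms(1)] assms(1) by auto
qed

lemma start_in_part_iff: "start \<in> C \<longleftrightarrow> 1 \<in> L ` C"
proof
  assume "start \<in> C"
  then show "1 \<in> L ` C"
    using label_start by (metis image_eqI)
next
  assume "1 \<in> L ` C"
  then obtain z where z: "z \<in> C" "L z = 1"
    by (metis imageE)
  then have "z = start"
    using start_unique part_subset by blast
  with z show "start \<in> C"
    by simp
qed

lemma promotion_image_shift:
  assumes "1 \<le> l" "l < card A"
  shows "l \<in> prom ` C \<longleftrightarrow> Suc l \<in> L ` C"
proof
  assume "l \<in> prom ` C"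
  then obtain z where z: "z \<in> C" "prom z = l"
    by (metis imageE)
  then have "z \<in> A" "\<not> chain_end z"
    using part_subset promotion_chain_end assms(2) by auto
  then have "L (target z) = Suc l"
    using z(2) promotion_eq_target label_target by fastforce
  then show "Suc l \<in> L ` C"
    using target_in_part[OF z(1) \<open>\<not> chain_end z\<close>] by (metis imageI)
next
  assume "Suc l \<in> L ` C"
  then obtain w where w: "w \<in> C" "L w = Suc l"
    by (metis imageE)
  then have "w \<in> A" "w \<noteq> start"
    using part_subset label_start assms(1) by auto
  then obtain y where y: "y \<in> A" "\<not> chain_end y" "target y = w"
    by (rule target_surj)
  then have "y \<in> C"
    using target_comparable[OF y(1,2)] mem_part_if_lt[OF w(1) y(1)] w(1) by auto
  moreover have "prom y = l"
    using promotion_eq_target[OF y(1,2)] y(3) w(2) by simp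
  ultimately show "l \<in> prom ` C"
    by blast
qed

lemma standardize_promotion_outside:
  assumes "start \<notin> C"
  shows "standardize C prom = standardize C L"
proof (rule standardize_cong[symmetric])
  have prom_eq: "prom z = L z - 1" and label_pos: "1 \<le> L z" if "z \<in> C" for z
  proof -
    have "z \<notin> chain"
    proof
      assume "z \<in> chain"
      then have "z = start \<or> lt start z"
        by (rule chain_above_start)
      then have "start \<in> C"
        using that mem_part_if_lt[OF that start_mem] by auto
      with assms show False
        by simp
    qed
    then show "prom z = L z - 1"
      using promotion_eq_target that part_subset unfolding chain_end_def target_def by auto
    show "1 \<le> L z"
      using label_range that part_subset by blast
  qed
  fix z1 z2
  assume "z1 \<in> C" "z2 \<in> C"
  then show "L z1 < L z2 \<longleftrightarrow> prom z1 < prom z2"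
    using prom_eq[of z1] prom_eq[of z2] label_pos[of z1] label_pos[of z2] by auto
qed

lemma labeled_poset_standardize: "C \<noteq> {} \<Longrightarrow> labeled_poset C lt (standardize C L)"
  using strict_poset_subset[OF poset part_subset] standardize_labeling[OF finite_part inj_on_part]
  by unfold_locales

lemma lsucc_standardize:
  assumes "y \<in> C" "\<not> maximal y"
  shows "lsucc C lt (standardize C L) y = succ y"
proof -
  interpret std: labeled_poset C lt "standardize C L"
    using labeled_poset_standardize assms(1) by blast
  have "y \<in> A"
    using assms(1) part_subset by blast
  have succ_in: "succ y \<in> C"
    using mem_part_if_lt[OF assms(1) succ_mem[OF \<open>y \<in> A\<close> assms(2)]] lt_succ[OF \<open>y \<in> A\<close> assms(2)]
    by blast
  show ?thesis
  proof (rule std.succ_eqI[OF assms(1) succ_in])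
    show "lt y (succ y)"
      using lt_succ[OF \<open>y \<in> A\<close> assms(2)] .
    fix z
    assume "z \<in> C" "lt y z"
    then have "L (succ y) \<le> L z"
      using label_succ_le[OF \<open>y \<in> A\<close> assms(2)] part_subset by auto
    then show "standardize C L (succ y) \<le> standardize C L z"
      using standardize_less_iff[OF finite_part inj_on_part \<open>z \<in> C\<close> succ_in] by linarith
  qed
qed

context
  assumes start_in_part: "start \<in> C"
begin

lemma chain_subset_part: "chain \<subseteq> C"
proof
  fix y
  assume "y \<in> chain"
  then have "y \<in> A" "y = start \<or> lt start y"
    using chain_subset chain_above_start by auto
  then show "y \<in> C"
    using start_in_part mem_part_if_lt[OF start_in_part \<open>y \<in> A\<close>] by auto
qed

lemma chain_start_standardize: "chain_start C (standardize C L) = start"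
proof -
  interpret std: labeled_poset C lt "standardize C L"
    using labeled_poset_standardize start_in_part by blast
  have "{w \<in> C. L w \<le> L start} = {start}"
  proof (intro equalityI subsetI)
    fix w
    assume "w \<in> {w \<in> C. L w \<le> L start}"
    then have "w \<in> A" "L w \<le> 1"
      using part_subset label_start by auto
    then have "L w = 1"
      using label_range[of w] by simp
    then show "w \<in> {start}"
      using start_unique[OF \<open>w \<in> A\<close>] by simp
  qed (use start_in_part in simp)
  then have "standardize C L start = 1"
    unfolding standardize_def using start_in_part by simp
  then show ?thesis
    using std.start_unique[OF start_in_part] by simp
qed

lemma promo_chain_standardize: "promo_chain C lt (standardize C L) = chain"
proof -
  interpret std: labeled_poset C lt "standardize C L"
    using labeled_poset_standardize start_in_part by blast
  have "std.chain_defined k = chain_defined k \<and>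
      (chain_defined k \<longrightarrow> std.chain_elem k = chain_elem k)" for k
  proof (induction k)
    case 0
    show ?case
      using chain_start_standardize
      by (simp add: std.chain_defined_0 chain_defined_0 std.chain_elem_0 chain_elem_0)
  next
    case (Suc k)
    show ?case
    proof (cases "chain_defined k")
      case True
      then have "chain_elem k \<in> C"
        using chain_subset_part promo_chain_eq by blast
      then show ?thesis
        using Suc.IH True is_maximal_part_iff lsucc_standardize
        by (simp add: std.chain_defined_Suc chain_defined_Suc std.chain_elem_Suc chain_elem_Suc)
    next
      case False
      then show ?thesis
        using Suc.IH by (simp add: std.chain_defined_Suc chain_defined_Suc)
    qed
  qed
  then have "{std.chain_elem k |k. std.chain_defined k} = {chain_elem k |k. chain_defined k}"
    by (metis (lifting))
  then show ?thesis
    unfolding std.promo_chain_eq promo_chain_eq .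
qed

lemma standardize_promotion_inside:
  "standardize C prom = promotion C lt (standardize C L)"
proof -
  interpret std: labeled_poset C lt "standardize C L"
    using labeled_poset_standardize start_in_part by blast
  let ?t = "standardize C L"
  have end_iff: "std.chain_end y \<longleftrightarrow> chain_end y" if "y \<in> C" for y
    unfolding std.chain_end_def chain_end_def
    using promo_chain_standardize is_maximal_part_iff[OF that] by simp
  have target_eq: "std.target y = target y" if "y \<in> C" "\<not> chain_end y" for y
    unfolding std.target_def target_def
    using promo_chain_standardize lsucc_standardize[OF that(1)] not_maximal_if_not_chain_end[OF _ that(2)]
    by simp
  have "prom z1 < prom z2 \<longleftrightarrow> std.prom z1 < std.prom z2" if z: "z1 \<in> C" "z2 \<in> C" for z1 z2
  proof -
    have targets: "L (target z1) < L (target z2) \<longleftrightarrow> ?t (std.target z1) < ?t (std.target z2)"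
      if "\<not> chain_end z1" "\<not> chain_end z2"
      using standardize_less_iff[OF finite_part inj_on_part] target_in_part z that target_eq by simp
    have "prom z1 < prom z2 \<longleftrightarrow> \<not> chain_end z1 \<and> (chain_end z2 \<or> L (target z1) < L (target z2))"
      using promotion_less_iff z part_subset by blast
    also have "\<dots> \<longleftrightarrow> \<not> std.chain_end z1 \<and> (std.chain_end z2 \<or> ?t (std.target z1) < ?t (std.target z2))"
      using end_iff[OF z(1)] end_iff[OF z(2)] targets by blast
    also have "\<dots> \<longleftrightarrow> std.prom z1 < std.prom z2"
      using std.promotion_less_iff[OF z] by simp
    finally show ?thesis .
  qed
  then have "standardize C prom = standardize C std.prom"
    by (rule standardize_cong)
  also have "\<dots> = std.prom"
    using std.promotion_labeling by (rule standardize_labeling_id)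
  finally show ?thesis .
qed

end

end

lemma closed_part_promotion_power:
  "labeled_poset A lt L \<Longrightarrow> comparability_closed A lt C \<Longrightarrow>
    closed_part A lt ((promotion A lt ^^ k) L) C"
  using labeled_poset_promotion_power unfolding closed_part_def closed_part_axioms_def by blast

lemma promotion_power_image_shift:
  assumes "labeled_poset A lt L" "comparability_closed A lt C" "1 \<le> l" "l + k \<le> card A"
  shows "l \<in> (promotion A lt ^^ k) L ` C \<longleftrightarrow> l + k \<in> L ` C"
  using assms(3,4)
proof (induction k arbitrary: l)
  case (Suc k)
  have "l \<in> (promotion A lt ^^ Suc k) L ` C \<longleftrightarrow> Suc l \<in> (promotion A lt ^^ k) L ` C"
    using closed_part.promotion_image_shift[OF closed_part_promotion_power[OF assms(1,2)]] Suc.prems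
    by simp
  also have "\<dots> \<longleftrightarrow> Suc l + k \<in> L ` C"
    using Suc.IH Suc.prems by simp
  finally show ?case
    by simp
qed simp

text \<open>Step \<open>j\<close> promotes the restriction to \<open>C\<close> iff the chain starts in \<open>C\<close>, i.e. iff the
  original label \<open>j + 1\<close> lies in \<open>C\<close>.\<close>

lemma standardize_promotion_power:
  assumes "labeled_poset A lt L" "comparability_closed A lt C" "k \<le> card A"
  shows "standardize C ((promotion A lt ^^ k) L)
    = (promotion C lt ^^ card {j. j < k \<and> Suc j \<in> L ` C}) (standardize C L)"
  using assms(3)
proof (induction k)
  case (Suc k)
  let ?M = "(promotion A lt ^^ k) L"
  interpret M: closed_part A lt ?M C
    using closed_part_promotion_power[OF assms(1,2)] .
  have start_iff: "chain_start A ?M \<in> C \<longleftrightarrow> Suc k \<in> L ` C"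
    using M.start_in_part_iff promotion_power_image_shift[OF assms(1,2), of 1 k] Suc.prems by simp
  have steps: "{j. j < Suc k \<and> Suc j \<in> L ` C}
      = {j. j < k \<and> Suc j \<in> L ` C} \<union> (if Suc k \<in> L ` C then {k} else {})"
    by (auto simp: less_Suc_eq)
  show ?case
  proof (cases "Suc k \<in> L ` C")
    case True
    then show ?thesis
      using M.standardize_promotion_inside start_iff Suc steps by simp
  next
    case False
    then show ?thesis
      using M.standardize_promotion_outside start_iff Suc steps by simp
  qed
qed simp

section \<open>Tangled labelings\<close>

lemma (in labeled_poset) tangled_witness:
  assumes "2 \<le> card A" "tangled A lt L"
  obtains x y where "x \<in> A" "y \<in> A" "lt x y"
    "(promotion A lt ^^ (card A - 2)) L x = 2" "(promotion A lt ^^ (card A - 2)) L y = 1"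
proof -
  define M where "M = (promotion A lt ^^ (card A - 2)) L"
  interpret M: labeled_poset A lt M
    unfolding M_def by (rule labeled_poset_promotion_power[OF labeled_poset_axioms])
  have "sorted_from A lt (Suc (card A) - (card A - 2)) M"
    unfolding M_def by (rule sorted_from_promotion_power[OF labeled_poset_axioms sorted_from_Suc_card])
  moreover have "Suc (card A) - (card A - 2) = 3"
    using assms(1) by linarith
  ultimately have sorted_3: "sorted_from A lt 3 M"
    by simp
  obtain x y where xy: "x \<in> A" "y \<in> A" "lt x y" "\<not> M x < M y"
    using tangled_iff_not_linext assms unfolding M_def is_linext_def by blast
  then have "M x < 3"
    using sorted_3 unfolding sorted_from_def by force
  moreover have "M x \<noteq> M y"
    using M.inj_label[OF xy(1,2)] lt_irrefl[OF xy(1)] xy(3) by auto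
  ultimately have "M x = 2" "M y = 1"
    using xy(4) M.label_range[OF xy(1)] M.label_range[OF xy(2)] by auto
  with xy show ?thesis
    using that unfolding M_def by blast
qed

lemma card_shifted_labels:
  assumes "S \<subseteq> {1..n}" "{n - 1, n} \<subseteq> S" "2 \<le> n"
  shows "card {j. j < n - 2 \<and> Suc j \<in> S} = card S - 2"
proof -
  have "Suc ` {j. j < n - 2 \<and> Suc j \<in> S} = S - {n - 1, n}"
  proof (intro equalityI subsetI)
    fix u
    assume u: "u \<in> S - {n - 1, n}"
    moreover have "1 \<le> u" "u \<le> n"
      using u assms(1) by auto
    ultimately have "u = Suc (u - 1)" "u - 1 < n - 2"
      by auto
    with u show "u \<in> Suc ` {j. j < n - 2 \<and> Suc j \<in> S}"
      by (intro image_eqI[of _ Suc "u - 1"]) auto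
  qed auto
  then have "card {j. j < n - 2 \<and> Suc j \<in> S} = card (S - {n - 1, n})"
    using card_image[of Suc "{j. j < n - 2 \<and> Suc j \<in> S}"] by simp
  also have "\<dots> = card S - 2"
    using assms finite_subset[OF assms(1)] by (simp add: card_Diff_subset)
  finally show ?thesis .
qed

lemma two_le_card_if_top_labels:
  fixes L :: "'a \<Rightarrow> nat"
  assumes "finite C" "{n - 1, n} \<subseteq> L ` C" "2 \<le> n"
  shows "2 \<le> card C"
proof -
  have "card {n - 1, n} \<le> card (L ` C)"
    using assms(1,2) by (intro card_mono) auto
  also have "\<dots> \<le> card C"
    using assms(1) by (rule card_image_le)
  finally show ?thesis
    using assms(3) by simp
qed

context closed_part
begin

lemma linext_standardize_iff: "is_linext C lt (standardize C L) \<longleftrightarrow> is_linext C lt L"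
  unfolding is_linext_def by (auto simp: standardize_less_iff[OF finite_part inj_on_part])

lemma top_labels_in_part:
  assumes "2 \<le> card A" "1 \<in> (promotion A lt ^^ (card A - 2)) L ` C"
    "2 \<in> (promotion A lt ^^ (card A - 2)) L ` C"
  shows "{card A - 1, card A} \<subseteq> L ` C"
proof -
  have "1 + (card A - 2) = card A - 1" "2 + (card A - 2) = card A"
    using assms(1) by auto
  then show ?thesis
    using assms(2,3) promotion_power_image_shift[OF labeled_poset_axioms closed, of 1 "card A - 2"]
      promotion_power_image_shift[OF labeled_poset_axioms closed, of 2 "card A - 2"]
    by simp
qed

lemma standardize_promotion_power_top:
  assumes "2 \<le> card A" "{card A - 1, card A} \<subseteq> L ` C"
  shows "standardize C ((promotion A lt ^^ (card A - 2)) L)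
    = (promotion C lt ^^ (card C - 2)) (standardize C L)"
proof -
  have "card {j. j < card A - 2 \<and> Suc j \<in> L ` C} = card (L ` C) - 2"
    using card_shifted_labels[OF _ assms(2,1)] labelings_image[OF labeling] part_subset by blast
  then show ?thesis
    using standardize_promotion_power[OF labeled_poset_axioms closed, of "card A - 2"]
    by (simp add: card_image inj_on_part)
qed

end

definition tangled_through :: "'a set \<Rightarrow> ('a \<Rightarrow> 'a \<Rightarrow> bool) \<Rightarrow> 'a set \<Rightarrow> ('a \<Rightarrow> nat) set" where
  "tangled_through A lt C =
     {L \<in> labelings A. {card A - 1, card A} \<subseteq> L ` C \<and> standardize C L \<in> tangled_labelings C lt}"

lemma tangled_labeling_tangled_through:
  assumes poset: "strict_poset A lt" and "2 \<le> card A" and L: "L \<in> tangled_labelings A lt"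
  obtains C where "C \<in> components A lt" "L \<in> tangled_through A lt C"
proof -
  let ?M = "(promotion A lt ^^ (card A - 2)) L"
  have lab: "L \<in> labelings A" and "tangled A lt L"
    using L unfolding tangled_labelings_def by auto
  interpret labeled_poset A lt L
    using poset lab assms(2) by unfold_locales auto
  obtain x y where xy: "x \<in> A" "y \<in> A" "lt x y" "?M x = 2" "?M y = 1"
    using tangled_witness[OF assms(2) \<open>tangled A lt L\<close>] by blast
  obtain C where C: "C \<in> components A lt" "x \<in> C" "y \<in> C"
    using component_of_lt[OF poset xy(1-3)] by blast
  interpret closed_part A lt L C
    using comparability_closed_components[OF poset C(1)] by unfold_locales
  interpret M: closed_part A lt ?M C
    using closed_part_promotion_power[OF labeled_poset_axioms closed] .
  interpret std: labeled_poset C lt "standardize C L"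
    using labeled_poset_standardize C(2) by blast
  have top: "{card A - 1, card A} \<subseteq> L ` C"
    using top_labels_in_part[OF assms(2)] xy(4,5) C(2,3) by (metis image_eqI)
  have "\<not> is_linext C lt ?M"
    using xy C(2,3) unfolding is_linext_def by force
  then have "\<not> is_linext C lt ((promotion C lt ^^ (card C - 2)) (standardize C L))"
    using M.linext_standardize_iff standardize_promotion_power_top[OF assms(2) top] by simp
  then have "tangled C lt (standardize C L)"
    using std.tangled_iff_not_linext two_le_card_if_top_labels[OF finite_part top assms(2)] by simp
  then have "L \<in> tangled_through A lt C"
    unfolding tangled_through_def tangled_labelings_def using lab top std.labeling by blast
  with C(1) show ?thesis
    by (rule that)
qed

section \<open>Counting\<close>

lemma fact_diff_mult_prod: "k \<le> m \<Longrightarrow> fact (m - k) * (\<Prod>i = 0..<k. m - i) = (fact m :: nat)"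
proof (induction k)
  case (Suc k)
  then have "m - k = Suc (m - Suc k)"
    by simp
  then have "fact (m - Suc k) * (m - k) = (fact (m - k) :: nat)"
    using fact_Suc[of "m - Suc k"] by simp
  have "fact (m - Suc k) * (\<Prod>i = 0..<Suc k. m - i)
      = fact (m - Suc k) * (m - k) * (\<Prod>i = 0..<k. m - i)"
    by (simp add: prod.atLeast0_lessThan_Suc ac_simps)
  also have "\<dots> = fact m"
    using Suc \<open>fact (m - Suc k) * (m - k) = fact (m - k)\<close> by simp
  finally show ?case .
qed simp

lemma fact_pred_mult_prod:
  assumes "2 \<le> c" "c \<le> n"
  shows "fact (c - 1) * (\<Prod>i = 0..<n - c. n - 2 - i) = (c - 1) * (fact (n - 2) :: nat)"
proof -
  have "c - 1 = Suc (c - 2)" "n - c \<le> n - 2" "n - 2 - (n - c) = c - 2"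
    using assms by auto
  then have "fact (c - 1) = (c - 1) * (fact (c - 2) :: nat)"
    and "fact (c - 2) * (\<Prod>i = 0..<n - c. n - 2 - i) = (fact (n - 2) :: nat)"
    using fact_Suc[of "c - 2"] fact_diff_mult_prod[of "n - c" "n - 2"] by simp_all
  then show ?thesis
    by (simp add: mult.assoc)
qed

lemma restrict_tangled_through:
  assumes L: "L \<in> tangled_through A lt C" and "C \<subseteq> A"
  shows "restrict L (A - C) \<in> {g \<in> (A - C) \<rightarrow>\<^sub>E {1..card A - 2}. inj_on g (A - C)}"
proof -
  have lab: "L \<in> labelings A" and top: "{card A - 1, card A} \<subseteq> L ` C"
    using L unfolding tangled_through_def by auto
  have "L z \<in> {1..card A - 2}" if "z \<in> A - C" for z
  proof -
    have "L z \<notin> L ` C"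
      using that assms(2) inj_on_image_mem_iff[OF labelings_inj_on[OF lab]] by blast
    then have "L z \<noteq> card A - 1" "L z \<noteq> card A"
      using top by auto
    moreover have "1 \<le> L z" "L z \<le> card A"
      using labelings_range[OF lab] that by auto
    ultimately show ?thesis
      by simp
  qed
  then show ?thesis
    using labelings_inj_on[OF lab] by (auto simp: inj_on_def)
qed

lemma inj_on_tangled_through:
  assumes "finite A" "C \<subseteq> A"
  shows "inj_on (\<lambda>L. (standardize C L, restrict L (A - C))) (tangled_through A lt C)"
proof (rule inj_onI)
  fix L1 L2
  assume L1: "L1 \<in> tangled_through A lt C" and L2: "L2 \<in> tangled_through A lt C"
    and "(standardize C L1, restrict L1 (A - C)) = (standardize C L2, restrict L2 (A - C))"
  then have "standardize C L1 = standardize C L2"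
    and restrict_eq: "restrict L1 (A - C) = restrict L2 (A - C)"
    by auto
  moreover have "L1 z = L2 z" if "z \<in> A - C" for z
    using fun_cong[OF restrict_eq, of z] that by simp
  ultimately show "L1 = L2"
    using labeling_eq_if_standardize_eq[OF _ _ assms(2,1)] L1 L2 unfolding tangled_through_def by blast
qed

lemma card_tangled_through_le:
  assumes "finite A" "C \<subseteq> A" "2 \<le> card A"
    and bound: "card (tangled_labelings C lt) \<le> fact (card C - 1)"
  shows "card (tangled_through A lt C) \<le> (card C - 1) * fact (card A - 2)"
proof (cases "2 \<le> card C")
  case False
  then have "tangled_through A lt C = {}"
    using two_le_card_if_top_labels[OF finite_subset[OF assms(2,1)] _ assms(3)]
    unfolding tangled_through_def by blast
  then show ?thesis
    by simp
next
  case True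
  let ?n = "card A" and ?T = "tangled_labelings C lt"
  let ?F = "{g \<in> (A - C) \<rightarrow>\<^sub>E {1..?n - 2}. inj_on g (A - C)}"
  have "finite (?T \<times> ?F)"
    using finite_labelings[OF finite_subset[OF assms(2,1)]] assms(1)
    unfolding tangled_labelings_def by (simp add: finite_PiE)
  moreover have "(\<lambda>L. (standardize C L, restrict L (A - C))) ` tangled_through A lt C \<subseteq> ?T \<times> ?F"
  proof (rule image_subsetI)
    fix L
    assume L: "L \<in> tangled_through A lt C"
    then have "standardize C L \<in> ?T"
      unfolding tangled_through_def by blast
    with restrict_tangled_through[OF L assms(2)] show "(standardize C L, restrict L (A - C)) \<in> ?T \<times> ?F"
      by blast
  qed
  ultimately have "card (tangled_through A lt C) \<le> card (?T \<times> ?F)"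
    using card_inj_on_le[OF inj_on_tangled_through[OF assms(1,2)]] by blast
  also have "\<dots> = card ?T * card ?F"
    by (rule card_cartesian_product)
  also have "card ?F = (\<Prod>i = 0..<?n - card C. ?n - 2 - i)"
    using card_inj_on_subset_funcset[of "A - C" "{1..?n - 2}" "A - C"] assms(1,2)
    by (simp add: card_Diff_subset finite_subset)
  also have "card ?T * \<dots> \<le> fact (card C - 1) * (\<Prod>i = 0..<?n - card C. ?n - 2 - i)"
    using bound by (rule mult_right_mono) simp
  also have "\<dots> = (card C - 1) * fact (?n - 2)"
    using fact_pred_mult_prod[OF True card_mono[OF assms(1,2)]] .
  finally show ?thesis .
qed

theorem mainTheorem11:
  fixes A :: "'a set" and lt :: "'a \<Rightarrow> 'a \<Rightarrow> bool"
  assumes "strict_poset A lt"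
    and "card A \<ge> 2"
    and "\<forall>C \<in> components A lt. card (tangled_labelings C lt) \<le> fact (card C - 1)"
  shows "card (tangled_labelings A lt) \<le> (card A - card (components A lt)) * fact (card A - 2)"
proof -
  let ?K = "components A lt"
  have fin: "finite A"
    using assms(1) unfolding strict_poset_def by blast
  have "tangled_labelings A lt \<subseteq> (\<Union>C\<in>?K. tangled_through A lt C)"
    using tangled_labeling_tangled_through[OF assms(1,2)] by blast
  moreover have "(\<Union>C\<in>?K. tangled_through A lt C) \<subseteq> labelings A"
    unfolding tangled_through_def by blast
  ultimately have "card (tangled_labelings A lt) \<le> card (\<Union>C\<in>?K. tangled_through A lt C)"
    using finite_labelings[OF fin] by (meson card_mono finite_subset)
  also have "\<dots> \<le> (\<Sum>C\<in>?K. card (tangled_through A lt C))"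
    using finite_quotient[OF fin] hasse_connected_equiv unfolding components_def equiv_def
    by (intro card_UN_le) blast
  also have "\<dots> \<le> (\<Sum>C\<in>?K. (card C - 1) * fact (card A - 2))"
    using card_tangled_through_le[OF fin components_subset assms(2)] assms(3) by (intro sum_mono) blast
  also have "\<dots> = (card A - card ?K) * fact (card A - 2)"
    using sum_card_components[OF fin, of lt] by (simp add: sum_distrib_right[symmetric])
  finally show ?thesis .
qed

end
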